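(* Fix $k\in[m-1]$, $\delta_t\in(0,1)$, and let $q_k=h_{(k)}-h_{(k+1)}$. (i) PTR-Laplace: with $\epsilon>0$, compute $\hat q_k=q_k+L-\log(1/\delta_t)/\epsilon$ with $L\sim\mathrm{Lap}(1/\epsilon)$, output $\perp$ if $\hat q_k\le1$ and otherwise output $\{i_{(1)},\dots,i_{(k)}\}$. This mechanism satisfies $(\epsilon,\delta_t)$-DP. (ii) PTR-Gaussian: with $\sigma_2>0$, compute $\hat q_k=\max\{1,q_k\}+Z-\sigma_2\sqrt{2\log(1/\delta_t)}$ with $Z\sim\mathcal{N}(0,\sigma_2^2)$, output $\perp$ if $\hat q_k\le1$ and otherwise output $\{i_{(1)},\dots,i_{(k)}\}$. This mechanism satisfies $\delta_t$-approximate-$(\alpha,\frac{\alpha}{2\sigma_2^2})$-RDP.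
   Context: Setting: a dataset consists of users; there are $m$ candidates and each user votes $1$ for an arbitrary subset of candidates; $h_j$ is the number of users voting for candidate $j$. Datasets are neighboring if one is obtained from the other by adding or removing one user. $h_{(1)}\ge\dots\ge h_{(m)}$ are sorted counts with corresponding candidates $i_{(1)},\dots,i_{(m)}$. $\mathrm{Lap}(b)$ is the Laplace distribution with density $\frac{1}{2b}e^{-|x|/b}$. $(\epsilon,\delta)$-DP: $\Pr[\mathcal{M}(D)\in O]\le e^\epsilon\Pr[\mathcal{M}(D')\in O]+\delta$ for all neighbors and measurable $O$. Rényi divergence: $\mathbb{D}_\alpha(P\|Q)=\frac{1}{\alpha-1}\log\mathbb{E}_{o\sim Q}[(P(o)/Q(o))^\alpha]$. $\mathcal{M}$ is $\delta$-approximate-$(\alpha,\epsilon(\alpha))$-RDP if for all neighbors $D,D'$ there exist events $E$ (depending on $\mathcal{M}(D)$) and $E'$ (depending on $\mathcal{M}(D')$) with $\Pr[E]\ge1-\delta$, $\Pr[E']\ge1-\delta$ and $\mathbb{D}_\alpha(\mathcal{M}(D)|E\|\mathcal{M}(D')|E')\le\epsilon(\alpha)$ for all $\alpha\ge1$. *)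

theory Defs
  imports "HOL-Probability.Probability"
begin

text \<open>A dataset is a finite multiset of users; each user is the set of candidates
  (from 0..m-1) she votes for.\<close>

definition valid_dataset :: "nat \<Rightarrow> nat set multiset \<Rightarrow> bool" where
  "valid_dataset m D \<longleftrightarrow> (\<forall>S \<in># D. S \<subseteq> {..<m})"

definition neighboring :: "nat set multiset \<Rightarrow> nat set multiset \<Rightarrow> bool" where
  "neighboring D D' \<longleftrightarrow> (\<exists>S. D' = D + {#S#} \<or> D = D' + {#S#})"

definition cnt :: "nat set multiset \<Rightarrow> nat \<Rightarrow> nat" where
  "cnt D j = size (filter_mset (\<lambda>S. j \<in> S) D)"

text \<open>Counts sorted in non-increasing order; h_(i) is entry i-1 (1-based index i).\<close>
definition sorted_counts :: "nat \<Rightarrow> nat set multiset \<Rightarrow> nat list" where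
  "sorted_counts m D = rev (sort (map (cnt D) [0..<m]))"

definition hsorted :: "nat \<Rightarrow> nat set multiset \<Rightarrow> nat \<Rightarrow> nat" where
  "hsorted m D i = sorted_counts m D ! (i - 1)"

definition gap :: "nat \<Rightarrow> nat \<Rightarrow> nat set multiset \<Rightarrow> real" where
  "gap m k D = real (hsorted m D k) - real (hsorted m D (k + 1))"

text \<open>The candidates i_(1),...,i_(k): candidates sorted by count in non-increasing
  order, ties broken by smaller index first; candidate j is among the first k iff fewer
  than k candidates precede it in this order.\<close>
definition topk :: "nat \<Rightarrow> nat \<Rightarrow> nat set multiset \<Rightarrow> nat set" where
  "topk m k D = {j. j < m \<and>
     card {j'. j' < m \<and> (cnt D j' > cnt D j \<or> (cnt D j' = cnt D j \<and> j' < j))} < k}"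

definition laplace_density :: "real \<Rightarrow> real \<Rightarrow> real" where
  "laplace_density b x = exp (- \<bar>x\<bar> / b) / (2 * b)"

definition laplace_distr :: "real \<Rightarrow> real measure" where
  "laplace_distr b = density lborel (\<lambda>x. ennreal (laplace_density b x))"

definition gauss_distr :: "real \<Rightarrow> real measure" where
  "gauss_distr \<sigma> = density lborel (\<lambda>x. ennreal (normal_density 0 \<sigma> x))"

text \<open>Outputs: None stands for \<bottom>, Some S for the released set.\<close>
definition ptr_laplace_out ::
  "nat \<Rightarrow> nat \<Rightarrow> real \<Rightarrow> real \<Rightarrow> nat set multiset \<Rightarrow> real \<Rightarrow> nat set option" where
  "ptr_laplace_out m k \<epsilon> \<delta> D L =
     (if gap m k D + L - ln (1 / \<delta>) / \<epsilon> \<le> 1 then None else Some (topk m k D))"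

definition ptr_gauss_out ::
  "nat \<Rightarrow> nat \<Rightarrow> real \<Rightarrow> real \<Rightarrow> nat set multiset \<Rightarrow> real \<Rightarrow> nat set option" where
  "ptr_gauss_out m k \<sigma> \<delta> D Z =
     (if max 1 (gap m k D) + Z - \<sigma> * sqrt (2 * ln (1 / \<delta>)) \<le> 1 then None
      else Some (topk m k D))"

text \<open>A mechanism is given by a noise distribution N and an output map out D noise;
  its output distribution on dataset D is the push-forward of N.\<close>
definition mech_distr :: "'n measure \<Rightarrow> ('d \<Rightarrow> 'n \<Rightarrow> 'o) \<Rightarrow> 'd \<Rightarrow> 'o measure" where
  "mech_distr N out D = distr N (count_space UNIV) (out D)"

definition is_dp :: "nat \<Rightarrow> 'n measure \<Rightarrow> (nat set multiset \<Rightarrow> 'n \<Rightarrow> 'o) \<Rightarrow> real \<Rightarrow> real \<Rightarrow> bool" where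
  "is_dp m N out \<epsilon> \<delta> \<longleftrightarrow>
     (\<forall>D D'. valid_dataset m D \<and> valid_dataset m D' \<and> neighboring D D' \<longrightarrow>
        (\<forall>A. measure (mech_distr N out D) A \<le> exp \<epsilon> * measure (mech_distr N out D') A + \<delta>))"

definition cond_on :: "'a measure \<Rightarrow> 'a set \<Rightarrow> 'a measure" where
  "cond_on M E = density M (\<lambda>x. indicator E x / emeasure M E)"

definition renyi_div :: "real \<Rightarrow> 'o measure \<Rightarrow> 'o measure \<Rightarrow> ereal" where
  "renyi_div \<alpha> P Q =
     (if \<exists>y. measure Q {y} = 0 \<and> measure P {y} \<noteq> 0 then \<infinity>
      else if \<alpha> = 1 then ereal (\<integral>y. ln (measure P {y} / measure Q {y}) \<partial>P)
      else ereal (1 / (\<alpha> - 1) * ln (\<integral>y. (measure P {y} / measure Q {y}) powr \<alpha> \<partial>Q)))"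

text \<open>delta-approximate-(alpha, eps(alpha))-RDP; the events E, E' are events of the
  probability space of the mechanism run on D resp. D' (i.e. on its internal randomness).\<close>
definition approx_rdp ::
  "nat \<Rightarrow> 'n measure \<Rightarrow> (nat set multiset \<Rightarrow> 'n \<Rightarrow> 'o) \<Rightarrow> real \<Rightarrow> (real \<Rightarrow> real) \<Rightarrow> bool" where
  "approx_rdp m N out \<delta> eps \<longleftrightarrow>
     (\<forall>D D'. valid_dataset m D \<and> valid_dataset m D' \<and> neighboring D D' \<longrightarrow>
        (\<exists>E E'. E \<in> sets N \<and> E' \<in> sets N \<and>
           measure N E \<ge> 1 - \<delta> \<and> measure N E' \<ge> 1 - \<delta> \<and>
           (\<forall>\<alpha>\<ge>1. renyi_div \<alpha> (mech_distr (cond_on N E) out D) (mech_distr (cond_on N E') out D')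
                     \<le> ereal (eps \<alpha>))))"

end

theory Submission
  imports Defs
begin

text \<open>The gap has sensitivity 1, and since counts are integers a gap above 1
  pins down the top-\<open>k\<close> set on both neighbouring datasets. So either the released sets
  agree, and the two output distributions are the same threshold test applied to noise
  shifted by at most 1: the Laplace density changes by at most a factor \<open>e\<^sup>\<epsilon>\<close>
  under such a shift, and the Renyi divergence of the two Bernoulli outcomes is at most that
  of \<open>N(0, \<sigma>\<^sup>2)\<close> and \<open>N(\<mu>, \<sigma>\<^sup>2)\<close> with \<open>|\<mu>| \<le> 1\<close>, i.e.
  \<open>\<alpha> / (2 \<sigma>\<^sup>2)\<close>. Or both gaps are at most 1, and the set is released only when the
  noise exceeds \<open>ln (1/\<delta>) / \<epsilon>\<close> resp. \<open>\<sigma> \<surd>(2 ln (1/\<delta>))\<close>, which has probability at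
  most \<open>\<delta>\<close>; in the Gaussian case, conditioning on the complement of this event makes
  both outputs \<open>\<bottom>\<close> almost surely.\<close>

section \<open>Order statistics of the vote counts\<close>

lemma sorted_nth_ge_iff_card:
  fixes xs :: "nat list"
  assumes "sorted xs" "p < length xs"
  shows "v \<le> xs ! p \<longleftrightarrow> length xs - p \<le> card {q. q < length xs \<and> v \<le> xs ! q}"
proof
  assume "v \<le> xs ! p"
  hence "{p..<length xs} \<subseteq> {q. q < length xs \<and> v \<le> xs ! q}"
    using assms by (auto intro: order_trans[OF _ sorted_nth_mono])
  from card_mono[OF _ this] show "length xs - p \<le> card {q. q < length xs \<and> v \<le> xs ! q}"
    by simp
next
  assume card_ge: "length xs - p \<le> card {q. q < length xs \<and> v \<le> xs ! q}"
  show "v \<le> xs ! p"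
  proof (rule ccontr)
    assume "\<not> v \<le> xs ! p"
    hence "{q. q < length xs \<and> v \<le> xs ! q} \<subseteq> {Suc p..<length xs}"
      using assms by (auto simp: not_le)
        (metis le_trans linorder_not_le not_less_eq_eq sorted_nth_mono)
    from card_mono[OF _ this] card_ge assms show False by simp
  qed
qed

lemma hsorted_ge_iff_card:
  assumes "1 \<le> i" "i \<le> m"
  shows "v \<le> hsorted m D i \<longleftrightarrow> i \<le> card {j. j < m \<and> v \<le> cnt D j}"
proof -
  define xs where "xs = sort (map (cnt D) [0..<m])"
  have len: "length xs = m" by (simp add: xs_def)
  have "hsorted m D i = xs ! (m - i)"
    unfolding hsorted_def sorted_counts_def xs_def[symmetric] using assms len
    by (simp add: rev_nth Suc_diff_le)
  moreover have "card {q. q < length xs \<and> v \<le> xs ! q} = card {j. j < m \<and> v \<le> cnt D j}"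
  proof -
    have "card {q. q < length xs \<and> v \<le> xs ! q} = length (filter ((\<le>) v) xs)"
      by (simp add: length_filter_conv_card)
    also have "\<dots> = size (filter_mset ((\<le>) v) (mset xs))"
      by (metis mset_filter size_mset)
    also have "\<dots> = size (filter_mset ((\<le>) v) (mset (map (cnt D) [0..<m])))"
      by (simp add: xs_def)
    also have "\<dots> = length (filter ((\<le>) v) (map (cnt D) [0..<m]))"
      by (metis mset_filter size_mset)
    also have "\<dots> = card {j. j < m \<and> v \<le> cnt D j}"
      by (simp add: length_filter_conv_card cong: conj_cong)
    finally show ?thesis .
  qed
  moreover have "sorted xs" by (simp add: xs_def)
  ultimately show ?thesis using sorted_nth_ge_iff_card[of xs "m - i" v] assms len by simp
qed

lemma cnt_add_mset: "cnt (add_mset S D) j = cnt D j + (if j \<in> S then 1 else 0)"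
  by (simp add: cnt_def)

lemma hsorted_add_mset_bounds:
  assumes "1 \<le> i" "i \<le> m"
  shows "hsorted m D i \<le> hsorted m (add_mset S D) i \<and> hsorted m (add_mset S D) i \<le> hsorted m D i + 1"
proof
  let ?v = "hsorted m D i"
  have "i \<le> card {j. j < m \<and> ?v \<le> cnt D j}"
    using hsorted_ge_iff_card[OF assms, of ?v D] by simp
  also have "\<dots> \<le> card {j. j < m \<and> ?v \<le> cnt (add_mset S D) j}"
    by (rule card_mono) (auto simp: cnt_add_mset)
  finally show "?v \<le> hsorted m (add_mset S D) i" using hsorted_ge_iff_card[OF assms] by simp
next
  let ?w = "hsorted m (add_mset S D) i"
  have "i \<le> card {j. j < m \<and> ?w \<le> cnt (add_mset S D) j}"
    using hsorted_ge_iff_card[OF assms, of ?w "add_mset S D"] by simp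
  also have "\<dots> \<le> card {j. j < m \<and> ?w - 1 \<le> cnt D j}"
    by (rule card_mono) (auto simp: cnt_add_mset split: if_splits)
  finally have "?w - 1 \<le> hsorted m D i" using hsorted_ge_iff_card[OF assms] by simp
  thus "?w \<le> hsorted m D i + 1" by simp
qed

lemma abs_gap_add_mset_le_1:
  assumes "1 \<le> k" "k < m"
  shows "\<bar>gap m k D - gap m k (add_mset S D)\<bar> \<le> 1"
  using hsorted_add_mset_bounds[of k m D S] hsorted_add_mset_bounds[of "k + 1" m D S] assms
  unfolding gap_def by auto

lemma abs_gap_neighboring_le_1:
  assumes "1 \<le> k" "k < m" "neighboring D D'"
  shows "\<bar>gap m k D - gap m k D'\<bar> \<le> 1"
proof -
  obtain S where "D' = add_mset S D \<or> D = add_mset S D'"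
    using assms(3) unfolding neighboring_def by auto
  thus ?thesis
    using abs_gap_add_mset_le_1[OF assms(1,2), where D = D and S = S] abs_gap_add_mset_le_1[OF assms(1,2), where D = D' and S = S]
    by (auto simp: abs_minus_commute)
qed

lemma topk_eq_if_card_eq:
  assumes "card {j. j < m \<and> v \<le> cnt D j} = k"
  shows "topk m k D = {j. j < m \<and> v \<le> cnt D j}"
proof -
  let ?G = "{j. j < m \<and> v \<le> cnt D j}"
  let ?P = "\<lambda>j. {j'. j' < m \<and> (cnt D j' > cnt D j \<or> (cnt D j' = cnt D j \<and> j' < j))}"
  show ?thesis
  proof (intro set_eqI iffI)
    fix j assume "j \<in> topk m k D"
    hence j: "j < m" "card (?P j) < k" unfolding topk_def by auto
    show "j \<in> ?G"
    proof (rule ccontr)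
      assume "j \<notin> ?G"
      hence "?G \<subseteq> ?P j" using j by auto
      from card_mono[OF _ this] j assms show False by simp
    qed
  next
    fix j assume j: "j \<in> ?G"
    have "?P j \<subseteq> ?G - {j}" using j by auto
    from card_mono[OF _ this] have "card (?P j) \<le> card (?G - {j})" by simp
    also have "\<dots> < k"
      using j assms card_gt_0_iff[of ?G] by (auto simp: card_Diff_singleton)
    finally show "j \<in> topk m k D" using j unfolding topk_def by auto
  qed
qed

text \<open>Counts are integers, so a gap above 1 is a margin of at least two votes.\<close>

lemma topk_threshold_if_gap_gt_1:
  assumes "1 \<le> k" "k < m" "gap m k D > 1"
  defines "v \<equiv> hsorted m D k"
  shows "card {j. j < m \<and> v \<le> cnt D j} = k"
    and "{j. j < m \<and> v - 1 \<le> cnt D j} = {j. j < m \<and> v \<le> cnt D j}"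
proof -
  have margin: "hsorted m D (k + 1) + 2 \<le> v" using assms(3) unfolding gap_def v_def by linarith
  have ge: "k \<le> card {j. j < m \<and> v \<le> cnt D j}"
    using hsorted_ge_iff_card[of k m v D] assms unfolding v_def by simp
  have "\<not> v - 1 \<le> hsorted m D (k + 1)" using margin by simp
  hence lt: "\<not> k + 1 \<le> card {j. j < m \<and> v - 1 \<le> cnt D j}"
    using hsorted_ge_iff_card[of "k + 1" m "v - 1" D] assms by simp
  have sub: "{j. j < m \<and> v \<le> cnt D j} \<subseteq> {j. j < m \<and> v - 1 \<le> cnt D j}" by auto
  from card_mono[OF _ sub] ge lt show "card {j. j < m \<and> v \<le> cnt D j} = k" by simp
  with card_subset_eq[OF _ sub] card_mono[OF _ sub] lt
  show "{j. j < m \<and> v - 1 \<le> cnt D j} = {j. j < m \<and> v \<le> cnt D j}" by simp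
qed

lemma topk_add_mset_eq_if_gap_gt_1:
  assumes "1 \<le> k" "k < m"
  shows "gap m k D > 1 \<Longrightarrow> topk m k (add_mset S D) = topk m k D"
    and "gap m k (add_mset S D) > 1 \<Longrightarrow> topk m k (add_mset S D) = topk m k D"
proof -
  assume "gap m k D > 1"
  define v where "v = hsorted m D k"
  note thr = topk_threshold_if_gap_gt_1[OF assms \<open>gap m k D > 1\<close>, folded v_def]
  have "{j. j < m \<and> v \<le> cnt (add_mset S D) j} \<subseteq> {j. j < m \<and> v - 1 \<le> cnt D j}"
    by (auto simp: cnt_add_mset split: if_splits)
  moreover have "{j. j < m \<and> v \<le> cnt D j} \<subseteq> {j. j < m \<and> v \<le> cnt (add_mset S D) j}"
    by (auto simp: cnt_add_mset)
  ultimately have "{j. j < m \<and> v \<le> cnt (add_mset S D) j} = {j. j < m \<and> v \<le> cnt D j}"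
    using thr(2) by blast
  thus "topk m k (add_mset S D) = topk m k D"
    using topk_eq_if_card_eq[of m v D k] topk_eq_if_card_eq[of m v "add_mset S D" k] thr(1) by simp
next
  assume "gap m k (add_mset S D) > 1"
  define v where "v = hsorted m (add_mset S D) k"
  note thr = topk_threshold_if_gap_gt_1[OF assms \<open>gap m k (add_mset S D) > 1\<close>, folded v_def]
  have "{j. j < m \<and> v - 1 \<le> cnt D j} \<subseteq> {j. j < m \<and> v - 1 \<le> cnt (add_mset S D) j}"
    by (auto simp: cnt_add_mset)
  moreover have "{j. j < m \<and> v \<le> cnt (add_mset S D) j} \<subseteq> {j. j < m \<and> v - 1 \<le> cnt D j}"
    by (auto simp: cnt_add_mset split: if_splits)
  ultimately have "{j. j < m \<and> v - 1 \<le> cnt D j} = {j. j < m \<and> v \<le> cnt (add_mset S D) j}"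
    using thr(2) by blast
  thus "topk m k (add_mset S D) = topk m k D"
    using topk_eq_if_card_eq[of m "v - 1" D k] topk_eq_if_card_eq[of m v "add_mset S D" k] thr(1)
    by simp
qed

lemma gap_le_1_if_topk_ne:
  assumes "1 \<le> k" "k < m" "neighboring D D'" "topk m k D \<noteq> topk m k D'"
  shows "gap m k D \<le> 1 \<and> gap m k D' \<le> 1"
proof -
  obtain S where "D' = add_mset S D \<or> D = add_mset S D'"
    using assms(3) unfolding neighboring_def by auto
  thus ?thesis
    using topk_add_mset_eq_if_gap_gt_1[OF assms(1,2), where D = D and S = S]
      topk_add_mset_eq_if_gap_gt_1[OF assms(1,2), where D = D' and S = S] assms(4)
    by force
qed

section \<open>Releasing a fixed set above a threshold\<close>

definition threshold_release :: "real \<Rightarrow> 'o \<Rightarrow> real \<Rightarrow> 'o option" where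
  "threshold_release a T y = (if y \<le> a then None else Some T)"

lemma ptr_laplace_out_eq:
  "ptr_laplace_out m k \<epsilon> \<delta> D = threshold_release (1 + ln (1 / \<delta>) / \<epsilon> - gap m k D) (topk m k D)"
  by (auto simp: fun_eq_iff ptr_laplace_out_def threshold_release_def)

lemma ptr_gauss_out_eq:
  "ptr_gauss_out m k \<sigma> \<delta> D =
     threshold_release (1 + \<sigma> * sqrt (2 * ln (1 / \<delta>)) - max 1 (gap m k D)) (topk m k D)"
  by (auto simp: fun_eq_iff ptr_gauss_out_def threshold_release_def)

lemma measurable_threshold_release:
  assumes "sets N = sets borel"
  shows "threshold_release a T \<in> measurable N (count_space UNIV)"
proof -
  have "(\<lambda>y. if y \<in> {..a} then None else Some T) \<in> measurable N (count_space UNIV)"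
    by (rule measurable_If_set) (use assms in auto)
  thus ?thesis by (simp add: threshold_release_def[abs_def])
qed

lemma vimage_threshold_release_in_borel: "threshold_release a T -` A \<in> sets borel"
  using measurable_sets[OF measurable_threshold_release[of borel a T], of A] by simp

lemma measure_distr_threshold_release:
  assumes "sets N = sets borel"
  shows "measure (distr N (count_space UNIV) (threshold_release a T)) A
       = measure N (threshold_release a T -` A \<inter> space N)"
  using assms by (intro measure_distr measurable_threshold_release) simp_all

lemma measure_distr_threshold_release_singleton:
  assumes "prob_space N" "sets N = sets borel"
  shows "measure (distr N (count_space UNIV) (threshold_release a T)) {z} =
    (if z = None then measure N {..a} else if z = Some T then 1 - measure N {..a} else 0)"
proof -
  interpret prob_space N by fact
  have A: "{..a} \<in> sets N" using assms(2) by simp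
  have "measure (distr N (count_space UNIV) (threshold_release a T)) {z}
      = measure N (threshold_release a T -` {z} \<inter> space N)"
    by (rule measure_distr) (simp_all add: measurable_threshold_release assms(2))
  also have "threshold_release a T -` {z} \<inter> space N
      = (if z = None then {..a} else if z = Some T then space N - {..a} else {})"
    using sets.sets_into_space[OF A] by (auto simp: threshold_release_def split: if_splits)
  finally show ?thesis using A by (auto simp: prob_compl)
qed

lemma integral_distr_threshold_release:
  fixes h :: "'o option \<Rightarrow> real"
  assumes "prob_space N" "sets N = sets borel"
  shows "(\<integral>z. h z \<partial>distr N (count_space UNIV) (threshold_release a T))
       = h None * measure N {..a} + h (Some T) * (1 - measure N {..a})"
proof -
  interpret prob_space N by fact
  have A: "{..a} \<in> sets N" using assms(2) by simp
  have "(\<integral>z. h z \<partial>distr N (count_space UNIV) (threshold_release a T))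
      = (\<integral>y. h (threshold_release a T y) \<partial>N)"
    by (rule integral_distr) (simp_all add: measurable_threshold_release assms(2))
  also have "\<dots> = (\<integral>y. h None * indicator {..a} y + h (Some T) * indicator (space N - {..a}) y \<partial>N)"
    using sets.sets_into_space[OF A]
    by (intro Bochner_Integration.integral_cong) (auto simp: threshold_release_def indicator_def)
  also have "\<dots> = h None * measure N {..a} + h (Some T) * measure N (space N - {..a})"
    using A by (subst Bochner_Integration.integral_add)
      (auto intro!: integrable_real_indicator simp: less_top[symmetric] Int_absorb2 sets.sets_into_space)
  also have "measure N (space N - {..a}) = 1 - measure N {..a}" using A by (rule prob_compl)
  finally show ?thesis .
qed

definition bernoulli_renyi :: "real \<Rightarrow> real \<Rightarrow> real \<Rightarrow> real" where
  "bernoulli_renyi \<alpha> p q = (if \<alpha> = 1 then p * ln (p / q) + (1 - p) * ln ((1 - p) / (1 - q))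
     else 1 / (\<alpha> - 1) * ln (q * (p / q) powr \<alpha> + (1 - q) * ((1 - p) / (1 - q)) powr \<alpha>))"

lemma renyi_div_distr_threshold_release:
  assumes N: "prob_space N" "sets N = sets borel" and N': "prob_space N'" "sets N' = sets borel"
    and abs_cont: "measure N' {..a'} = 0 \<Longrightarrow> measure N {..a} = 0"
      "measure N' {..a'} = 1 \<Longrightarrow> measure N {..a} = 1"
  shows "renyi_div \<alpha> (distr N (count_space UNIV) (threshold_release a T))
                     (distr N' (count_space UNIV) (threshold_release a' T))
       = ereal (bernoulli_renyi \<alpha> (measure N {..a}) (measure N' {..a'}))"
proof -
  let ?P = "distr N (count_space UNIV) (threshold_release a T)"
  let ?Q = "distr N' (count_space UNIV) (threshold_release a' T)"
  let ?p = "measure N {..a}" and ?q = "measure N' {..a'}"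
  note P_atom = measure_distr_threshold_release_singleton[OF N, of a T]
  note Q_atom = measure_distr_threshold_release_singleton[OF N', of a' T]
  have no_atom: "\<not> (\<exists>z. measure ?Q {z} = 0 \<and> measure ?P {z} \<noteq> 0)"
    using abs_cont by (auto simp: P_atom Q_atom)
  show ?thesis
  proof (cases "\<alpha> = 1")
    case True
    have "(\<integral>z. ln (measure ?P {z} / measure ?Q {z}) \<partial>?P)
        = ?p * ln (?p / ?q) + (1 - ?p) * ln ((1 - ?p) / (1 - ?q))"
      by (simp add: integral_distr_threshold_release[OF N] P_atom Q_atom mult.commute)
    thus ?thesis using no_atom True unfolding renyi_div_def bernoulli_renyi_def by simp
  next
    case False
    have "(\<integral>z. (measure ?P {z} / measure ?Q {z}) powr \<alpha> \<partial>?Q)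
        = ?q * (?p / ?q) powr \<alpha> + (1 - ?q) * ((1 - ?p) / (1 - ?q)) powr \<alpha>"
      by (simp add: integral_distr_threshold_release[OF N'] P_atom Q_atom mult.commute)
    thus ?thesis using no_atom False unfolding renyi_div_def bernoulli_renyi_def by simp
  qed
qed

lemma renyi_div_distr_threshold_release_eq_0:
  assumes N: "prob_space N" "sets N = sets borel" and N': "prob_space N'" "sets N' = sets borel"
    and "measure N {..a} = 1" "measure N' {..a'} = 1"
  shows "renyi_div \<alpha> (distr N (count_space UNIV) (threshold_release a T))
                     (distr N' (count_space UNIV) (threshold_release a' T')) = 0"
proof -
  let ?P = "distr N (count_space UNIV) (threshold_release a T)"
  let ?Q = "distr N' (count_space UNIV) (threshold_release a' T')"
  have P_atom: "measure ?P {z} = (if z = None then 1 else 0)" for z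
    using measure_distr_threshold_release_singleton[OF N, of a T z] assms by auto
  have Q_atom: "measure ?Q {z} = (if z = None then 1 else 0)" for z
    using measure_distr_threshold_release_singleton[OF N', of a' T' z] assms by auto
  have no_atom: "\<not> (\<exists>z. measure ?Q {z} = 0 \<and> measure ?P {z} \<noteq> 0)"
    by (auto simp: P_atom Q_atom)
  show ?thesis
  proof (cases "\<alpha> = 1")
    case True
    have "(\<integral>z. ln (measure ?P {z} / measure ?Q {z}) \<partial>?P) = 0"
      by (simp add: integral_distr_threshold_release[OF N] P_atom Q_atom)
    thus ?thesis using no_atom True unfolding renyi_div_def by (simp add: zero_ereal_def)
  next
    case False
    have "(\<integral>z. (measure ?P {z} / measure ?Q {z}) powr \<alpha> \<partial>?Q) = 1"
      using assms by (simp add: integral_distr_threshold_release[OF N'] P_atom Q_atom)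
    thus ?thesis using no_atom False unfolding renyi_div_def by (simp add: zero_ereal_def)
  qed
qed

section \<open>Renyi divergence of Bernoulli distributions\<close>

lemma powr_ge_tangent:
  fixes x \<alpha> :: real
  assumes "\<alpha> > 1" "x \<ge> 0"
  shows "\<alpha> * x - (\<alpha> - 1) \<le> x powr \<alpha>"
proof (cases "x = 0")
  case True thus ?thesis using assms by simp
next
  case False
  hence x: "x > 0" using assms by simp
  have "(x powr \<alpha>) powr (1 / \<alpha>) * 1 powr (1 - 1 / \<alpha>) \<le> (1 / \<alpha>) * x powr \<alpha> + (1 - 1 / \<alpha>) * 1"
    using assms x by (intro Youngs_inequality_0) auto
  moreover have "(x powr \<alpha>) powr (1 / \<alpha>) = x" using assms x by (simp add: powr_powr)
  ultimately have "x \<le> (1 / \<alpha>) * x powr \<alpha> + (1 - 1 / \<alpha>)" by simp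
  hence "\<alpha> * x \<le> \<alpha> * ((1 / \<alpha>) * x powr \<alpha> + (1 - 1 / \<alpha>))" using assms by simp
  also have "\<dots> = x powr \<alpha> + (\<alpha> - 1)" using assms by (simp add: field_simps)
  finally show ?thesis by simp
qed

lemma powr_mult_powr_ge_tangent:
  fixes u v r \<alpha> :: real
  assumes "\<alpha> > 1" "u \<ge> 0" "v > 0" "r > 0"
  shows "\<alpha> * r powr (\<alpha> - 1) * u - (\<alpha> - 1) * r powr \<alpha> * v \<le> u powr \<alpha> * v powr (1 - \<alpha>)"
proof (cases "u = 0")
  case True thus ?thesis using assms by simp
next
  case False
  hence u: "u > 0" using assms by simp
  define x where "x = u / (v * r)"
  have "x \<ge> 0" using u assms by (simp add: x_def)
  hence "\<alpha> * x - (\<alpha> - 1) \<le> x powr \<alpha>" by (rule powr_ge_tangent[OF assms(1)])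
  from mult_right_mono[OF this, of "v * r powr \<alpha>"]
  have "(\<alpha> * x - (\<alpha> - 1)) * (v * r powr \<alpha>) \<le> x powr \<alpha> * (v * r powr \<alpha>)"
    using assms by simp
  moreover have "x * (v * r powr \<alpha>) = u * r powr (\<alpha> - 1)"
    using assms by (simp add: x_def powr_diff field_simps)
  moreover have "x powr \<alpha> * (v * r powr \<alpha>) = u powr \<alpha> * v powr (1 - \<alpha>)"
    using assms u by (simp add: x_def powr_divide powr_mult powr_diff field_simps)
  ultimately show ?thesis by (simp add: algebra_simps)
qed

text \<open>Integrate the tangent bound at the ratio \<open>r = U / V\<close> of the two masses on \<open>R\<close>
  (data processing for the Renyi moment).\<close>

lemma integral_powr_mult_powr_ge:
  fixes M :: "'a measure" and u v :: "'a \<Rightarrow> real" and \<alpha> :: real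
  assumes \<alpha>: "\<alpha> > 1" and R: "R \<in> sets M"
    and int_u: "integrable M u" and int_v: "integrable M v"
    and int_w: "integrable M (\<lambda>y. u y powr \<alpha> * v y powr (1 - \<alpha>))"
    and u_nonneg: "\<And>y. u y \<ge> 0" and v_pos: "\<And>y. v y > 0"
    and U_pos: "(\<integral>y. u y * indicator R y \<partial>M) > 0"
    and V_pos: "(\<integral>y. v y * indicator R y \<partial>M) > 0"
  shows "(\<integral>y. u y * indicator R y \<partial>M) powr \<alpha> * (\<integral>y. v y * indicator R y \<partial>M) powr (1 - \<alpha>)
         \<le> (\<integral>y. u y powr \<alpha> * v y powr (1 - \<alpha>) * indicator R y \<partial>M)"
proof -
  define U where "U = (\<integral>y. u y * indicator R y \<partial>M)"
  define V where "V = (\<integral>y. v y * indicator R y \<partial>M)"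
  define r where "r = U / V"
  have U: "U > 0" and V: "V > 0" using U_pos V_pos by (simp_all add: U_def V_def)
  have r: "r > 0" using U V by (simp add: r_def)
  have int_uR: "integrable M (\<lambda>y. u y * indicator R y)"
    by (intro integrable_real_mult_indicator R int_u)
  have int_vR: "integrable M (\<lambda>y. v y * indicator R y)"
    by (intro integrable_real_mult_indicator R int_v)
  have "(\<integral>y. \<alpha> * r powr (\<alpha> - 1) * (u y * indicator R y) - (\<alpha> - 1) * r powr \<alpha> * (v y * indicator R y) \<partial>M)
      \<le> (\<integral>y. u y powr \<alpha> * v y powr (1 - \<alpha>) * indicator R y \<partial>M)"
  proof (rule integral_mono)
    show "integrable M (\<lambda>y. \<alpha> * r powr (\<alpha> - 1) * (u y * indicator R y) - (\<alpha> - 1) * r powr \<alpha> * (v y * indicator R y))"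
      using int_uR int_vR by auto
    show "integrable M (\<lambda>y. u y powr \<alpha> * v y powr (1 - \<alpha>) * indicator R y)"
      by (intro integrable_real_mult_indicator R int_w)
    show "\<alpha> * r powr (\<alpha> - 1) * (u y * indicator R y) - (\<alpha> - 1) * r powr \<alpha> * (v y * indicator R y)
          \<le> u y powr \<alpha> * v y powr (1 - \<alpha>) * indicator R y" for y
      using powr_mult_powr_ge_tangent[OF \<alpha> u_nonneg v_pos r, of y y] by (simp add: indicator_def)
  qed
  also have "(\<integral>y. \<alpha> * r powr (\<alpha> - 1) * (u y * indicator R y) - (\<alpha> - 1) * r powr \<alpha> * (v y * indicator R y) \<partial>M)
      = \<alpha> * r powr (\<alpha> - 1) * U - (\<alpha> - 1) * r powr \<alpha> * V"
    using int_uR int_vR by (simp add: U_def V_def)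
  also have "\<dots> = U powr \<alpha> * V powr (1 - \<alpha>)"
  proof -
    have "r powr (\<alpha> - 1) * U = U powr \<alpha> * V powr (1 - \<alpha>)"
      using U V by (simp add: r_def powr_divide powr_diff field_simps)
    moreover have "r powr \<alpha> * V = U powr \<alpha> * V powr (1 - \<alpha>)"
      using U V by (simp add: r_def powr_divide powr_diff field_simps)
    ultimately show ?thesis by (simp add: algebra_simps)
  qed
  finally show ?thesis by (simp add: U_def V_def)
qed

lemma bernoulli_renyi_le_of_moment_le:
  assumes p: "0 < p" "p < 1" and q: "0 < q" "q < 1" and \<beta>: "\<beta> > 1"
    and moment: "p powr \<beta> * q powr (1 - \<beta>) + (1 - p) powr \<beta> * (1 - q) powr (1 - \<beta>)
                   \<le> exp (\<beta> * (\<beta> - 1) * K)"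
  shows "bernoulli_renyi \<beta> p q \<le> \<beta> * K"
proof -
  define S where "S = q * (p / q) powr \<beta> + (1 - q) * ((1 - p) / (1 - q)) powr \<beta>"
  have "S = p powr \<beta> * q powr (1 - \<beta>) + (1 - p) powr \<beta> * (1 - q) powr (1 - \<beta>)"
    using p q by (simp add: S_def powr_divide powr_diff field_simps)
  moreover have "S > 0" using p q by (simp add: S_def add_pos_pos)
  ultimately have "ln S \<le> \<beta> * (\<beta> - 1) * K"
    using moment by (metis ln_exp ln_le_cancel_iff exp_gt_zero)
  hence "ln S / (\<beta> - 1) \<le> \<beta> * K"
    using \<beta> by (simp add: divide_le_eq mult.commute mult.left_commute)
  thus ?thesis using \<beta> by (simp add: bernoulli_renyi_def S_def)
qed

lemma bernoulli_kl_le_bernoulli_renyi: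
  assumes p: "0 < p" "p < 1" and q: "0 < q" "q < 1" and \<beta>: "\<beta> > 1"
  shows "bernoulli_renyi 1 p q \<le> bernoulli_renyi \<beta> p q"
proof -
  let ?A = "(p / q) powr (\<beta> - 1)" and ?B = "((1 - p) / (1 - q)) powr (\<beta> - 1)"
  define S where "S = q * (p / q) powr \<beta> + (1 - q) * ((1 - p) / (1 - q)) powr \<beta>"
  have jensen: "p * ln ?A + (1 - p) * ln ?B \<le> ln (p * ?A + (1 - p) * ?B)"
    using concave_onD[OF ln_concave, of "1 - p" ?A ?B] p q by simp
  have "p * ln ?A + (1 - p) * ln ?B = (\<beta> - 1) * bernoulli_renyi 1 p q"
    using p q by (simp add: bernoulli_renyi_def ln_powr algebra_simps)
  moreover have "p * ?A + (1 - p) * ?B = S"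
    using p q by (simp add: S_def powr_diff field_simps)
  ultimately have "(\<beta> - 1) * bernoulli_renyi 1 p q \<le> ln S" using jensen by simp
  hence "bernoulli_renyi 1 p q \<le> ln S / (\<beta> - 1)" using \<beta> by (simp add: le_divide_eq mult.commute)
  thus ?thesis using \<beta> by (simp add: bernoulli_renyi_def S_def)
qed

text \<open>The case \<open>\<alpha> = 1\<close> follows by letting \<open>\<beta> \<rightarrow> 1\<^sup>+\<close>, since the Kullback-Leibler
  divergence is below every Renyi divergence of order \<open>\<beta> > 1\<close>.\<close>

lemma bernoulli_renyi_le_if_moments_le:
  assumes p: "0 < p" "p < 1" and q: "0 < q" "q < 1" and K: "K \<ge> 0" and \<alpha>: "\<alpha> \<ge> 1"
    and moments: "\<And>\<beta>. \<beta> > 1 \<Longrightarrow>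
      p powr \<beta> * q powr (1 - \<beta>) + (1 - p) powr \<beta> * (1 - q) powr (1 - \<beta>) \<le> exp (\<beta> * (\<beta> - 1) * K)"
  shows "bernoulli_renyi \<alpha> p q \<le> \<alpha> * K"
proof (cases "\<alpha> = 1")
  case False
  thus ?thesis using bernoulli_renyi_le_of_moment_le[OF p q _ moments] \<alpha> by simp
next
  case True
  have "bernoulli_renyi 1 p q \<le> K"
  proof (rule field_le_epsilon)
    fix e :: real assume e: "e > 0"
    define \<beta> where "\<beta> = 1 + e / (K + 1)"
    have \<beta>: "\<beta> > 1" using e K by (simp add: \<beta>_def)
    have "bernoulli_renyi 1 p q \<le> \<beta> * K"
      using bernoulli_kl_le_bernoulli_renyi[OF p q \<beta>] bernoulli_renyi_le_of_moment_le[OF p q \<beta> moments[OF \<beta>]]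
      by linarith
    also have "\<dots> = K + e * (K / (K + 1))" using K by (simp add: \<beta>_def field_simps)
    also have "\<dots> \<le> K + e" using K e mult_left_le[of "K / (K + 1)" e] by simp
    finally show "bernoulli_renyi 1 p q \<le> K + e" .
  qed
  thus ?thesis using True by simp
qed

section \<open>The Gaussian distribution\<close>

lemma prob_space_gauss_distr: "\<sigma> > 0 \<Longrightarrow> prob_space (gauss_distr \<sigma>)"
  unfolding gauss_distr_def by (rule prob_space_normal_density)

lemma space_gauss_distr [simp]: "space (gauss_distr \<sigma>) = UNIV"
  and sets_gauss_distr [simp]: "sets (gauss_distr \<sigma>) = sets borel"
  unfolding gauss_distr_def by simp_all

lemma measure_gauss_distr:
  assumes "S \<in> sets borel"
  shows "measure (gauss_distr \<sigma>) S = (\<integral>y. normal_density 0 \<sigma> y * indicator S y \<partial>lborel)"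
proof -
  have "measure (gauss_distr \<sigma>) S = (\<integral>y. indicator S y \<partial>gauss_distr \<sigma>)"
    by simp
  also have "\<dots> = (\<integral>y. normal_density 0 \<sigma> y *\<^sub>R indicator S y \<partial>lborel)"
    unfolding gauss_distr_def using assms by (intro integral_density) auto
  finally show ?thesis by simp
qed

lemma integrable_normal_density_indicator:
  "\<sigma> > 0 \<Longrightarrow> S \<in> sets borel \<Longrightarrow> integrable lborel (\<lambda>y. normal_density \<mu> \<sigma> y * indicator S y)"
  by (rule integrable_real_mult_indicator) auto

lemma integral_normal_density_atMost_shift:
  "(\<integral>y. normal_density 0 \<sigma> y * indicator {..a'} y \<partial>lborel)
   = (\<integral>y. normal_density (a - a') \<sigma> y * indicator {..a} y \<partial>lborel)"
proof -
  have "(\<integral>y. normal_density 0 \<sigma> y * indicator {..a'} y \<partial>lborel)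
      = (\<integral>y. normal_density 0 \<sigma> ((a' - a) + y) * indicator {..a'} ((a' - a) + y) \<partial>lborel)"
    using lborel_integral_real_affine[of 1 "\<lambda>y. normal_density 0 \<sigma> y * indicator {..a'} y" "a' - a"]
    by simp
  also have "\<dots> = (\<integral>y. normal_density (a - a') \<sigma> y * indicator {..a} y \<partial>lborel)"
    by (intro Bochner_Integration.integral_cong refl)
       (auto simp: normal_density_def indicator_def power2_eq_square algebra_simps)
  finally show ?thesis .
qed

lemma measure_gauss_distr_pos:
  assumes "\<sigma> > 0" "S \<in> sets borel" "{x..x + 1} \<subseteq> S"
  shows "measure (gauss_distr \<sigma>) S > 0"
proof -
  let ?f = "\<lambda>y. normal_density 0 \<sigma> y * indicator S y"
  have "measure (gauss_distr \<sigma>) S \<noteq> 0"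
  proof
    assume "measure (gauss_distr \<sigma>) S = 0"
    hence "integral\<^sup>L lborel ?f = 0" using measure_gauss_distr[OF assms(2)] by simp
    hence "AE y in lborel. ?f y = 0"
      using integral_nonneg_eq_0_iff_AE[of lborel ?f] integrable_normal_density_indicator[OF assms(1,2)]
      by simp
    moreover have "normal_density 0 \<sigma> y \<noteq> 0" for y
      using normal_density_pos[OF assms(1)] by (metis less_irrefl)
    ultimately have "AE y in lborel. y \<notin> S"
      by (auto elim!: eventually_mono simp: indicator_def split: if_splits)
    hence "emeasure lborel S = 0"
      using AE_iff_measurable[of S lborel "\<lambda>y. y \<notin> S"] assms(2) by auto
    moreover have "emeasure lborel {x..x + 1} \<le> emeasure lborel S"
      using assms by (intro emeasure_mono) auto
    ultimately show False by simp
  qed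
  thus ?thesis using measure_nonneg[of "gauss_distr \<sigma>" S] by linarith
qed

lemma measure_gauss_distr_greaterThan:
  assumes "\<sigma> > 0"
  shows "measure (gauss_distr \<sigma>) {a<..} = 1 - measure (gauss_distr \<sigma>) {..a}"
proof -
  interpret prob_space "gauss_distr \<sigma>" using prob_space_gauss_distr[OF assms] .
  have "measure (gauss_distr \<sigma>) (space (gauss_distr \<sigma>) - {..a}) = 1 - measure (gauss_distr \<sigma>) {..a}"
    by (rule prob_compl) simp
  moreover have "space (gauss_distr \<sigma>) - {..a} = {a<..}" by auto
  ultimately show ?thesis by simp
qed

lemma measure_gauss_distr_atMost_strict_bounds:
  assumes "\<sigma> > 0"
  shows "0 < measure (gauss_distr \<sigma>) {..a}" "measure (gauss_distr \<sigma>) {..a} < 1"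
  using measure_gauss_distr_pos[OF assms, of "{..a}" "a - 1"]
    measure_gauss_distr_pos[OF assms, of "{a<..}" "a + 1"] measure_gauss_distr_greaterThan[OF assms, of a]
  by (auto simp: subset_eq)

lemma normal_density_powr_mult_powr:
  fixes \<sigma> \<alpha> \<mu> y :: real
  assumes "\<sigma> > 0"
  shows "normal_density 0 \<sigma> y powr \<alpha> * normal_density \<mu> \<sigma> y powr (1 - \<alpha>)
       = exp (\<alpha> * (\<alpha> - 1) * \<mu>\<^sup>2 / (2 * \<sigma>\<^sup>2)) * normal_density ((1 - \<alpha>) * \<mu>) \<sigma> y"
proof -
  define C where "C = 1 / sqrt (2 * pi * \<sigma>\<^sup>2)"
  have C: "C > 0" using assms by (simp add: C_def)
  have density: "normal_density m \<sigma> y = C * exp (-(y - m)\<^sup>2 / (2 * \<sigma>\<^sup>2))" for m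
    by (simp add: normal_density_def C_def)
  have "normal_density 0 \<sigma> y powr \<alpha> * normal_density \<mu> \<sigma> y powr (1 - \<alpha>)
     = (C powr \<alpha> * C powr (1 - \<alpha>)) *
       exp (\<alpha> * (-(y - 0)\<^sup>2 / (2 * \<sigma>\<^sup>2)) + (1 - \<alpha>) * (-(y - \<mu>)\<^sup>2 / (2 * \<sigma>\<^sup>2)))"
    unfolding density powr_mult exp_powr_real by (simp add: mult_exp_exp mult.commute mult.left_commute)
  also have "C powr \<alpha> * C powr (1 - \<alpha>) = C" using C by (simp flip: powr_add)
  also have "\<alpha> * (-(y - 0)\<^sup>2 / (2 * \<sigma>\<^sup>2)) + (1 - \<alpha>) * (-(y - \<mu>)\<^sup>2 / (2 * \<sigma>\<^sup>2))
       = \<alpha> * (\<alpha> - 1) * \<mu>\<^sup>2 / (2 * \<sigma>\<^sup>2) + (-(y - (1 - \<alpha>) * \<mu>)\<^sup>2 / (2 * \<sigma>\<^sup>2))"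
    using assms by (simp add: field_simps power2_eq_square)
  finally show ?thesis by (simp add: density flip: exp_add)
qed

text \<open>Both probabilities are masses of the same half-line \<open>{..a}\<close>, under \<open>N(0, \<sigma>\<^sup>2)\<close>
  and under \<open>N(a - a', \<sigma>\<^sup>2)\<close>; the bound is the Renyi moment of these two Gaussians.\<close>

lemma gauss_atMost_renyi_moment_le:
  fixes \<sigma> a a' \<beta> :: real
  assumes \<sigma>: "\<sigma> > 0" and \<beta>: "\<beta> > 1"
  defines "p \<equiv> measure (gauss_distr \<sigma>) {..a}" and "q \<equiv> measure (gauss_distr \<sigma>) {..a'}"
  shows "p powr \<beta> * q powr (1 - \<beta>) + (1 - p) powr \<beta> * (1 - q) powr (1 - \<beta>)
         \<le> exp (\<beta> * (\<beta> - 1) * (a - a')\<^sup>2 / (2 * \<sigma>\<^sup>2))"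
proof -
  define u where "u = normal_density 0 \<sigma>"
  define v where "v = normal_density (a - a') \<sigma>"
  define w where "w y = u y powr \<beta> * v y powr (1 - \<beta>)" for y
  have int_u: "integrable lborel u" and int_v: "integrable lborel v"
    using \<sigma> by (simp_all add: u_def v_def)
  have u_nonneg: "u y \<ge> 0" and v_pos: "v y > 0" for y
    using \<sigma> by (simp_all add: u_def v_def normal_density_pos)
  have w_eq: "w y = exp (\<beta> * (\<beta> - 1) * (a - a')\<^sup>2 / (2 * \<sigma>\<^sup>2)) * normal_density ((1 - \<beta>) * (a - a')) \<sigma> y"
    for y unfolding w_def u_def v_def by (rule normal_density_powr_mult_powr[OF \<sigma>])
  have int_w: "integrable lborel w" unfolding w_eq using \<sigma> by simp
  have p_eq: "p = (\<integral>y. u y * indicator {..a} y \<partial>lborel)"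
    unfolding p_def u_def by (rule measure_gauss_distr) simp
  have q_eq: "q = (\<integral>y. v y * indicator {..a} y \<partial>lborel)"
    unfolding q_def v_def by (simp add: measure_gauss_distr integral_normal_density_atMost_shift)
  have p'_eq: "1 - p = (\<integral>y. u y * indicator {a<..} y \<partial>lborel)"
    unfolding p_def u_def
    by (subst measure_gauss_distr_greaterThan[OF \<sigma>, symmetric]) (rule measure_gauss_distr, simp)
  have q'_eq: "1 - q = (\<integral>y. v y * indicator {a<..} y \<partial>lborel)"
  proof -
    have "(\<integral>y. v y * indicator {a<..} y \<partial>lborel) = (\<integral>y. v y - v y * indicator {..a} y \<partial>lborel)"
      by (intro Bochner_Integration.integral_cong) (auto simp: indicator_def)
    also have "\<dots> = (\<integral>y. v y \<partial>lborel) - (\<integral>y. v y * indicator {..a} y \<partial>lborel)"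
      unfolding v_def using integrable_normal_density_indicator[OF \<sigma>, of "{..a}"] \<sigma>
      by (intro Bochner_Integration.integral_diff) auto
    also have "\<dots> = 1 - q" using \<sigma> by (simp add: q_eq v_def)
    finally show ?thesis by simp
  qed
  have p: "0 < p" "0 < 1 - p" and q: "0 < q" "0 < 1 - q"
    using measure_gauss_distr_atMost_strict_bounds[OF \<sigma>] by (simp_all add: p_def q_def)
  have "p powr \<beta> * q powr (1 - \<beta>) \<le> (\<integral>y. w y * indicator {..a} y \<partial>lborel)"
    using p q unfolding p_eq q_eq w_def
    by (intro integral_powr_mult_powr_ge[OF \<beta> _ int_u int_v _ u_nonneg v_pos]) (auto simp: w_def[symmetric] int_w)
  moreover have "(1 - p) powr \<beta> * (1 - q) powr (1 - \<beta>) \<le> (\<integral>y. w y * indicator {a<..} y \<partial>lborel)"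
    using p q unfolding p'_eq q'_eq w_def
    by (intro integral_powr_mult_powr_ge[OF \<beta> _ int_u int_v _ u_nonneg v_pos]) (auto simp: w_def[symmetric] int_w)
  moreover have "(\<integral>y. w y * indicator {..a} y \<partial>lborel) + (\<integral>y. w y * indicator {a<..} y \<partial>lborel)
      = (\<integral>y. w y \<partial>lborel)"
  proof -
    have "(\<integral>y. w y * indicator {..a} y \<partial>lborel) + (\<integral>y. w y * indicator {a<..} y \<partial>lborel)
        = (\<integral>y. w y * indicator {..a} y + w y * indicator {a<..} y \<partial>lborel)"
      using int_w by (intro Bochner_Integration.integral_add[symmetric] integrable_real_mult_indicator) auto
    also have "\<dots> = (\<integral>y. w y \<partial>lborel)"
      by (intro Bochner_Integration.integral_cong) (auto simp: indicator_def)
    finally show ?thesis .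
  qed
  moreover have "(\<integral>y. w y \<partial>lborel) = exp (\<beta> * (\<beta> - 1) * (a - a')\<^sup>2 / (2 * \<sigma>\<^sup>2))"
    unfolding w_eq using \<sigma> by simp
  ultimately show ?thesis by linarith
qed

lemma bernoulli_renyi_gauss_atMost_le:
  assumes \<sigma>: "\<sigma> > 0" and \<alpha>: "\<alpha> \<ge> 1"
  shows "bernoulli_renyi \<alpha> (measure (gauss_distr \<sigma>) {..a}) (measure (gauss_distr \<sigma>) {..a'})
         \<le> \<alpha> * ((a - a')\<^sup>2 / (2 * \<sigma>\<^sup>2))"
proof (rule bernoulli_renyi_le_if_moments_le[OF _ _ _ _ _ \<alpha>])
  show "measure (gauss_distr \<sigma>) {..a} powr \<beta> * measure (gauss_distr \<sigma>) {..a'} powr (1 - \<beta>)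
      + (1 - measure (gauss_distr \<sigma>) {..a}) powr \<beta> * (1 - measure (gauss_distr \<sigma>) {..a'}) powr (1 - \<beta>)
      \<le> exp (\<beta> * (\<beta> - 1) * ((a - a')\<^sup>2 / (2 * \<sigma>\<^sup>2)))" if "\<beta> > 1" for \<beta>
    using gauss_atMost_renyi_moment_le[OF \<sigma> that, of a a'] by simp
qed (simp_all add: measure_gauss_distr_atMost_strict_bounds[OF \<sigma>])

text \<open>Chernoff bound, obtained by tilting the density with \<open>exp (l (y - c))\<close>, \<open>l = c / \<sigma>\<^sup>2\<close>.\<close>

lemma measure_gauss_distr_greaterThan_le:
  fixes \<sigma> c :: real
  assumes \<sigma>: "\<sigma> > 0" and c: "c \<ge> 0"
  shows "measure (gauss_distr \<sigma>) {c<..} \<le> exp (- c\<^sup>2 / (2 * \<sigma>\<^sup>2))"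
proof -
  define l where "l = c / \<sigma>\<^sup>2"
  have l: "l \<ge> 0" using c by (simp add: l_def)
  have tilt: "normal_density 0 \<sigma> y * exp (l * (y - c))
      = exp (- l * c + l\<^sup>2 * \<sigma>\<^sup>2 / 2) * normal_density (l * \<sigma>\<^sup>2) \<sigma> y" for y
  proof -
    have "- (y - 0)\<^sup>2 / (2 * \<sigma>\<^sup>2) + l * (y - c)
        = - l * c + l\<^sup>2 * \<sigma>\<^sup>2 / 2 + (- (y - l * \<sigma>\<^sup>2)\<^sup>2 / (2 * \<sigma>\<^sup>2))"
      using \<sigma> by (simp add: field_simps power2_eq_square)
    thus ?thesis unfolding normal_density_def by (simp add: mult_exp_exp[symmetric] exp_add[symmetric] mult_ac)
  qed
  have "measure (gauss_distr \<sigma>) {c<..} = (\<integral>y. normal_density 0 \<sigma> y * indicator {c<..} y \<partial>lborel)"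
    by (rule measure_gauss_distr) simp
  also have "\<dots> \<le> (\<integral>y. normal_density 0 \<sigma> y * exp (l * (y - c)) \<partial>lborel)"
  proof (rule integral_mono)
    show "integrable lborel (\<lambda>y. normal_density 0 \<sigma> y * indicator {c<..} y)"
      using integrable_normal_density_indicator[OF \<sigma>] by simp
    show "integrable lborel (\<lambda>y. normal_density 0 \<sigma> y * exp (l * (y - c)))"
      unfolding tilt using \<sigma> by simp
    show "normal_density 0 \<sigma> y * indicator {c<..} y \<le> normal_density 0 \<sigma> y * exp (l * (y - c))" for y
      using l by (intro mult_left_mono) (auto simp: indicator_def)
  qed
  also have "\<dots> = exp (- l * c + l\<^sup>2 * \<sigma>\<^sup>2 / 2)" unfolding tilt using \<sigma> by simp
  also have "- l * c + l\<^sup>2 * \<sigma>\<^sup>2 / 2 = - c\<^sup>2 / (2 * \<sigma>\<^sup>2)"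
    using \<sigma> by (simp add: l_def field_simps power2_eq_square)
  finally show ?thesis .
qed

section \<open>The Laplace distribution\<close>

lemma borel_measurable_laplace_density [measurable]: "laplace_density b \<in> borel_measurable borel"
  unfolding laplace_density_def[abs_def] by measurable

lemma space_laplace_distr [simp]: "space (laplace_distr b) = UNIV"
  and sets_laplace_distr [simp]: "sets (laplace_distr b) = sets borel"
  unfolding laplace_distr_def by simp_all

lemma emeasure_laplace_distr:
  "S \<in> sets borel \<Longrightarrow>
     emeasure (laplace_distr b) S = (\<integral>\<^sup>+x. ennreal (laplace_density b x) * indicator S x \<partial>lborel)"
  unfolding laplace_distr_def by (rule emeasure_density) auto

lemma emeasure_laplace_distr_atLeast:
  fixes b c :: real
  assumes b: "b > 0" and c: "c \<ge> 0"
  shows "emeasure (laplace_distr b) {c..} = ennreal (exp (- c / b) / 2)"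
proof -
  have "emeasure (laplace_distr b) {c..} = (\<integral>\<^sup>+x. ennreal (laplace_density b x) * indicator {c..} x \<partial>lborel)"
    by (rule emeasure_laplace_distr) simp
  also have "\<dots> = ennreal (0 - (- exp (- c / b) / 2))"
  proof (rule nn_integral_FTC_atLeast)
    show "laplace_density b \<in> borel_measurable borel" by simp
    fix x :: real assume x: "c \<le> x"
    hence "laplace_density b x = exp (- x / b) / (2 * b)" using c by (simp add: laplace_density_def)
    moreover have "((\<lambda>x. - exp (- x / b) / 2) has_real_derivative exp (- x / b) / (2 * b)) (at x)"
      using b by (auto intro!: derivative_eq_intros simp: field_simps)
    ultimately show "((\<lambda>x. - exp (- x / b) / 2) has_real_derivative laplace_density b x) (at x)" by simp
    show "0 \<le> laplace_density b x" using b by (simp add: laplace_density_def)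
  next
    show "((\<lambda>x. - exp (- x / b) / 2) \<longlongrightarrow> 0) at_top"
      using b by real_asymp
  qed
  finally show ?thesis by simp
qed

lemma emeasure_laplace_distr_atMost_0:
  fixes b :: real
  assumes b: "b > 0"
  shows "emeasure (laplace_distr b) {..0} = ennreal (1 / 2)"
proof -
  have "emeasure (laplace_distr b) {..0} = (\<integral>\<^sup>+x. ennreal (laplace_density b x) * indicator {..0} x \<partial>lborel)"
    by (rule emeasure_laplace_distr) simp
  also have "\<dots> = ennreal \<bar>- 1\<bar> *
      (\<integral>\<^sup>+x. ennreal (laplace_density b (0 + (-1) * x)) * indicator {..0} (0 + (-1) * x) \<partial>lborel)"
    by (rule nn_integral_real_affine) auto
  also have "\<dots> = (\<integral>\<^sup>+x. ennreal (laplace_density b x) * indicator {0..} x \<partial>lborel)"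
    by (auto intro!: nn_integral_cong simp: laplace_density_def indicator_def)
  also have "\<dots> = emeasure (laplace_distr b) {0..}"
    by (rule emeasure_laplace_distr[symmetric]) simp
  also have "\<dots> = ennreal (1 / 2)" using emeasure_laplace_distr_atLeast[OF b, of 0] by simp
  finally show ?thesis .
qed

lemma finite_measure_laplace_distr:
  fixes b :: real
  assumes b: "b > 0"
  shows "finite_measure (laplace_distr b)"
proof
  have "emeasure (laplace_distr b) (space (laplace_distr b))
      \<le> emeasure (laplace_distr b) {..0} + emeasure (laplace_distr b) {0..}"
    by (rule order_trans[OF _ emeasure_subadditive]) (auto intro: emeasure_mono)
  also have "\<dots> = ennreal (1 / 2) + ennreal (1 / 2)"
    using emeasure_laplace_distr_atLeast[OF b, of 0] emeasure_laplace_distr_atMost_0[OF b] by simp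
  finally show "emeasure (laplace_distr b) (space (laplace_distr b)) \<noteq> \<infinity>"
    by (auto simp: top_unique simp flip: ennreal_plus)
qed

lemma measure_laplace_distr_greaterThan_le:
  fixes b c :: real
  assumes b: "b > 0" and c: "c \<ge> 0"
  shows "measure (laplace_distr b) {c<..} \<le> exp (- c / b) / 2"
proof -
  interpret finite_measure "laplace_distr b" by (rule finite_measure_laplace_distr[OF b])
  have "emeasure (laplace_distr b) {c<..} \<le> emeasure (laplace_distr b) {c..}"
    by (intro emeasure_mono) auto
  also have "\<dots> = ennreal (exp (- c / b) / 2)" by (rule emeasure_laplace_distr_atLeast[OF b c])
  finally show ?thesis by (simp add: emeasure_eq_measure ennreal_le_iff)
qed

lemma laplace_density_le_shift:
  assumes "b > 0"
  shows "laplace_density b x \<le> exp (\<bar>d\<bar> / b) * laplace_density b (x + d)"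
proof -
  have "- \<bar>x\<bar> / b \<le> \<bar>d\<bar> / b + - \<bar>x + d\<bar> / b"
    using assms abs_triangle_ineq[of x d] by (simp add: field_simps)
  hence "exp (- \<bar>x\<bar> / b) \<le> exp (\<bar>d\<bar> / b) * exp (- \<bar>x + d\<bar> / b)"
    by (simp add: mult_exp_exp)
  thus ?thesis using assms by (simp add: laplace_density_def divide_right_mono)
qed

lemma measure_laplace_distr_le_shift:
  fixes b d :: real
  assumes b: "b > 0" and S: "S \<in> sets borel"
  shows "measure (laplace_distr b) S \<le> exp (\<bar>d\<bar> / b) * measure (laplace_distr b) ((\<lambda>y. y - d) -` S)"
proof -
  interpret finite_measure "laplace_distr b" by (rule finite_measure_laplace_distr[OF b])
  note S [measurable]
  let ?f = "laplace_density b"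
  have S': "(\<lambda>y. y - d) -` S \<in> sets borel"
    using measurable_sets[OF _ S, of "\<lambda>y. y - d" borel] by simp
  have "emeasure (laplace_distr b) S = (\<integral>\<^sup>+x. ennreal (?f x) * indicator S x \<partial>lborel)"
    by (rule emeasure_laplace_distr[OF S])
  also have "\<dots> \<le> (\<integral>\<^sup>+x. ennreal (exp (\<bar>d\<bar> / b)) * (ennreal (?f (d + x)) * indicator S x) \<partial>lborel)"
    using laplace_density_le_shift[OF b] b
    by (intro nn_integral_mono)
       (auto simp: indicator_def add.commute laplace_density_def simp flip: ennreal_mult intro!: ennreal_leI)
  also have "\<dots> = ennreal (exp (\<bar>d\<bar> / b)) * (\<integral>\<^sup>+x. ennreal (?f (d + x)) * indicator S x \<partial>lborel)"
    by (intro nn_integral_cmult) measurable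
  also have "(\<integral>\<^sup>+x. ennreal (?f (d + x)) * indicator S x \<partial>lborel)
      = (\<integral>\<^sup>+x. ennreal (?f x) * indicator ((\<lambda>y. y - d) -` S) x \<partial>lborel)"
    using nn_integral_real_affine[of "\<lambda>x. ennreal (?f x) * indicator ((\<lambda>y. y - d) -` S) x" 1 d] S'
    by (simp add: indicator_def)
  also have "\<dots> = emeasure (laplace_distr b) ((\<lambda>y. y - d) -` S)"
    by (rule emeasure_laplace_distr[OF S', symmetric])
  finally show ?thesis
    by (simp add: emeasure_eq_measure ennreal_mult[symmetric] ennreal_le_iff)
qed

lemma cond_on_space:
  assumes "prob_space N"
  shows "cond_on N (space N) = N"
proof -
  interpret prob_space N by fact
  have "cond_on N (space N) = density N (\<lambda>_. 1)"
    unfolding cond_on_def by (intro density_cong) (auto simp: emeasure_space_1)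
  thus ?thesis by (simp add: density_1)
qed

lemma emeasure_cond_on_superset:
  assumes N: "prob_space N" and E: "E \<in> sets N" "measure N E > 0"
    and X: "X \<in> sets N" "E \<subseteq> X"
  shows "emeasure (cond_on N E) X = 1"
proof -
  interpret prob_space N by fact
  define pE where "pE = measure N E"
  have emeasure_E: "emeasure N E = ennreal pE" by (simp add: pE_def emeasure_eq_measure)
  have inverse: "1 / ennreal pE = ennreal (1 / pE)"
    using divide_ennreal[of 1 pE] E by (simp add: pE_def)
  have "emeasure (cond_on N E) X = (\<integral>\<^sup>+x. indicator E x / emeasure N E * indicator X x \<partial>N)"
    unfolding cond_on_def using E X by (intro emeasure_density) auto
  also have "\<dots> = (\<integral>\<^sup>+x. indicator E x * ennreal (1 / pE) \<partial>N)"
    using X by (intro nn_integral_cong) (auto simp: indicator_def emeasure_E inverse)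
  also have "\<dots> = emeasure N E * ennreal (1 / pE)"
    using E by (subst nn_integral_multc) auto
  also have "\<dots> = 1" using E by (simp add: emeasure_E pE_def ennreal_mult[symmetric])
  finally show ?thesis .
qed

lemma prob_space_cond_on:
  assumes "prob_space N" "E \<in> sets N" "measure N E > 0"
  shows "prob_space (cond_on N E)"
proof (rule prob_spaceI)
  have "emeasure (cond_on N E) (space N) = 1"
    using emeasure_cond_on_superset[OF assms _ sets.sets_into_space[OF assms(2)]] by simp
  thus "emeasure (cond_on N E) (space (cond_on N E)) = 1" by (simp add: cond_on_def)
qed

section \<open>Privacy of the two mechanisms\<close>

lemma laplace_threshold_release_le_shift:
  assumes b: "b > 0"
  shows "measure (distr (laplace_distr b) (count_space UNIV) (threshold_release a T)) A
       \<le> exp (\<bar>a - a'\<bar> / b) * measure (distr (laplace_distr b) (count_space UNIV) (threshold_release a' T)) A"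
proof -
  have "(\<lambda>y. y - (a' - a)) -` (threshold_release a T -` A) = threshold_release a' T -` A"
    by (auto simp: threshold_release_def split: if_splits)
  thus ?thesis
    using measure_laplace_distr_le_shift[OF b vimage_threshold_release_in_borel, of a T A "a' - a"]
    by (simp add: measure_distr_threshold_release abs_minus_commute)
qed

lemma laplace_threshold_release_le_shift_plus_tail:
  assumes b: "b > 0"
  shows "measure (distr (laplace_distr b) (count_space UNIV) (threshold_release a T)) A
       \<le> exp (\<bar>a - a'\<bar> / b) * measure (distr (laplace_distr b) (count_space UNIV) (threshold_release a' T')) A
         + measure (laplace_distr b) {a<..}"
proof -
  let ?N = "laplace_distr b"
  interpret finite_measure ?N by (rule finite_measure_laplace_distr[OF b])
  define X where "X = (if None \<in> A then {..a} else {})"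
  have "measure (distr ?N (count_space UNIV) (threshold_release a T)) A = measure ?N (threshold_release a T -` A)"
    by (simp add: measure_distr_threshold_release)
  also have "\<dots> \<le> measure ?N (X \<union> {a<..})"
    by (intro finite_measure_mono) (auto simp: X_def threshold_release_def split: if_splits)
  also have "\<dots> \<le> measure ?N X + measure ?N {a<..}"
    by (intro measure_Un_le) (auto simp: X_def)
  also have "measure ?N X \<le> exp (\<bar>a - a'\<bar> / b) * measure (distr ?N (count_space UNIV) (threshold_release a' T')) A"
  proof (cases "None \<in> A")
    case True
    have "measure ?N {..a} \<le> exp (\<bar>a - a'\<bar> / b) * measure ?N ((\<lambda>y. y - (a' - a)) -` {..a})"
      using measure_laplace_distr_le_shift[OF b, of "{..a}" "a' - a"] by (simp add: abs_minus_commute)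
    also have "(\<lambda>y. y - (a' - a)) -` {..a} = {..a'}" by auto
    also have "measure ?N {..a'} \<le> measure ?N (threshold_release a' T' -` A)"
      using True vimage_threshold_release_in_borel[of a' T' A]
      by (intro finite_measure_mono) (auto simp: threshold_release_def)
    finally show ?thesis using True by (simp add: X_def mult_left_mono measure_distr_threshold_release)
  next
    case False
    thus ?thesis by (simp add: X_def)
  qed
  finally show ?thesis by simp
qed

lemma laplace_tail_le_delta:
  assumes "0 < \<delta>" "\<delta> < 1" "\<epsilon> > 0"
  shows "measure (laplace_distr (1 / \<epsilon>)) {ln (1 / \<delta>) / \<epsilon><..} \<le> \<delta>"
proof -
  have "measure (laplace_distr (1 / \<epsilon>)) {ln (1 / \<delta>) / \<epsilon><..} \<le> exp (- (ln (1 / \<delta>) / \<epsilon>) / (1 / \<epsilon>)) / 2"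
    using assms by (intro measure_laplace_distr_greaterThan_le) simp_all
  also have "exp (- (ln (1 / \<delta>) / \<epsilon>) / (1 / \<epsilon>)) = \<delta>" using assms by (simp add: ln_div)
  finally show ?thesis using assms by simp
qed

lemma ptr_laplace_is_dp:
  assumes k: "1 \<le> k" "k < m" and \<delta>: "0 < \<delta>" "\<delta> < 1" and \<epsilon>: "\<epsilon> > 0"
  shows "is_dp m (laplace_distr (1 / \<epsilon>)) (ptr_laplace_out m k \<epsilon> \<delta>) \<epsilon> \<delta>"
  unfolding is_dp_def
proof (intro allI impI)
  fix D D' :: "nat set multiset" and A :: "nat set option set"
  assume "valid_dataset m D \<and> valid_dataset m D' \<and> neighboring D D'"
  hence neighbors: "neighboring D D'" by simp
  let ?N = "laplace_distr (1 / \<epsilon>)"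
  interpret finite_measure ?N using \<epsilon> by (intro finite_measure_laplace_distr) simp
  define c where "c = ln (1 / \<delta>) / \<epsilon>"
  define thr where "thr D = 1 + c - gap m k D" for D
  let ?P = "\<lambda>D. distr ?N (count_space UNIV) (threshold_release (thr D) (topk m k D))"
  have mech: "mech_distr ?N (ptr_laplace_out m k \<epsilon> \<delta>) D = ?P D" for D
    by (simp add: mech_distr_def ptr_laplace_out_eq thr_def c_def)
  have "\<bar>thr D - thr D'\<bar> \<le> 1"
    using abs_gap_neighboring_le_1[OF k neighbors] by (simp add: thr_def abs_minus_commute)
  hence shift: "exp (\<bar>thr D - thr D'\<bar> / (1 / \<epsilon>)) \<le> exp \<epsilon>"
    using \<epsilon> by (simp add: mult_le_cancel_right2)
  show "measure (mech_distr ?N (ptr_laplace_out m k \<epsilon> \<delta>) D) A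
      \<le> exp \<epsilon> * measure (mech_distr ?N (ptr_laplace_out m k \<epsilon> \<delta>) D') A + \<delta>"
  proof (cases "topk m k D = topk m k D'")
    case True
    have "measure (?P D) A \<le> exp (\<bar>thr D - thr D'\<bar> / (1 / \<epsilon>)) * measure (?P D') A"
      using laplace_threshold_release_le_shift[of "1 / \<epsilon>" "thr D" "topk m k D" A "thr D'"] \<epsilon> True
      by simp
    also have "\<dots> \<le> exp \<epsilon> * measure (?P D') A" using shift by (intro mult_right_mono) auto
    finally show ?thesis using \<delta> by (simp add: mech)
  next
    case False
    have "c \<le> thr D" using gap_le_1_if_topk_ne[OF k neighbors False] by (simp add: thr_def)
    hence "measure ?N {thr D<..} \<le> measure ?N {c<..}" by (intro finite_measure_mono) auto
    also have "\<dots> \<le> \<delta>" unfolding c_def by (rule laplace_tail_le_delta[OF \<delta> \<epsilon>])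
    finally have tail: "measure ?N {thr D<..} \<le> \<delta>" .
    have "measure (?P D) A
        \<le> exp (\<bar>thr D - thr D'\<bar> / (1 / \<epsilon>)) * measure (?P D') A + measure ?N {thr D<..}"
      using \<epsilon> by (intro laplace_threshold_release_le_shift_plus_tail) simp
    also have "\<dots> \<le> exp \<epsilon> * measure (?P D') A + \<delta>"
      using shift tail by (intro add_mono mult_right_mono) auto
    finally show ?thesis by (simp add: mech)
  qed
qed

lemma gauss_atMost_ge_1_minus_delta:
  assumes \<sigma>: "\<sigma> > 0" and \<delta>: "0 < \<delta>" "\<delta> < 1"
  shows "1 - \<delta> \<le> measure (gauss_distr \<sigma>) {..\<sigma> * sqrt (2 * ln (1 / \<delta>))}"
proof -
  define c where "c = \<sigma> * sqrt (2 * ln (1 / \<delta>))"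
  have ln: "ln (1 / \<delta>) > 0" using \<delta> by simp
  hence "measure (gauss_distr \<sigma>) {c<..} \<le> exp (- c\<^sup>2 / (2 * \<sigma>\<^sup>2))"
    using \<sigma> by (intro measure_gauss_distr_greaterThan_le) (simp_all add: c_def)
  also have "- c\<^sup>2 / (2 * \<sigma>\<^sup>2) = ln \<delta>"
    using \<sigma> \<delta> ln by (simp add: c_def power_mult_distrib ln_div)
  finally show ?thesis
    using \<delta> measure_gauss_distr_greaterThan[OF \<sigma>, of c] by (simp add: c_def)
qed

lemma gauss_threshold_release_renyi_div_le:
  assumes \<sigma>: "\<sigma> > 0" and \<alpha>: "\<alpha> \<ge> 1"
  shows "renyi_div \<alpha> (distr (gauss_distr \<sigma>) (count_space UNIV) (threshold_release a T))
                     (distr (gauss_distr \<sigma>) (count_space UNIV) (threshold_release a' T))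
       \<le> ereal (\<alpha> * ((a - a')\<^sup>2 / (2 * \<sigma>\<^sup>2)))"
proof -
  note gauss = prob_space_gauss_distr[OF \<sigma>] sets_gauss_distr
  note bounds = measure_gauss_distr_atMost_strict_bounds[OF \<sigma>]
  have "renyi_div \<alpha> (distr (gauss_distr \<sigma>) (count_space UNIV) (threshold_release a T))
                    (distr (gauss_distr \<sigma>) (count_space UNIV) (threshold_release a' T))
      = ereal (bernoulli_renyi \<alpha> (measure (gauss_distr \<sigma>) {..a}) (measure (gauss_distr \<sigma>) {..a'}))"
    by (rule renyi_div_distr_threshold_release[OF gauss gauss]) (metis bounds less_irrefl)+
  also have "\<dots> \<le> ereal (\<alpha> * ((a - a')\<^sup>2 / (2 * \<sigma>\<^sup>2)))"
    using bernoulli_renyi_gauss_atMost_le[OF \<sigma> \<alpha>] by simp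
  finally show ?thesis .
qed

lemma cond_gauss_threshold_release_renyi_div_eq_0:
  fixes c :: real
  assumes \<sigma>: "\<sigma> > 0"
  defines "N \<equiv> cond_on (gauss_distr \<sigma>) {..c}"
  shows "renyi_div \<alpha> (distr N (count_space UNIV) (threshold_release c T))
                     (distr N (count_space UNIV) (threshold_release c T')) = 0"
proof -
  note gauss = prob_space_gauss_distr[OF \<sigma>]
  have pos: "measure (gauss_distr \<sigma>) {..c} > 0"
    using measure_gauss_distr_atMost_strict_bounds[OF \<sigma>] by simp
  have "prob_space N" unfolding N_def by (rule prob_space_cond_on[OF gauss _ pos]) simp
  moreover have "sets N = sets borel" by (simp add: N_def cond_on_def)
  moreover have "measure N {..c} = 1"
    using emeasure_cond_on_superset[OF gauss _ pos, of "{..c}"] by (simp add: N_def measure_def)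
  ultimately show ?thesis by (intro renyi_div_distr_threshold_release_eq_0)
qed

lemma ptr_gauss_approx_rdp:
  assumes k: "1 \<le> k" "k < m" and \<delta>: "0 < \<delta>" "\<delta> < 1" and \<sigma>: "\<sigma> > 0"
  shows "approx_rdp m (gauss_distr \<sigma>) (ptr_gauss_out m k \<sigma> \<delta>) \<delta> (\<lambda>\<alpha>. \<alpha> / (2 * \<sigma> ^ 2))"
  unfolding approx_rdp_def
proof (intro allI impI)
  fix D D' :: "nat set multiset"
  assume "valid_dataset m D \<and> valid_dataset m D' \<and> neighboring D D'"
  hence neighbors: "neighboring D D'" by simp
  let ?N = "gauss_distr \<sigma>"
  let ?M = "\<lambda>E D. mech_distr (cond_on ?N E) (ptr_gauss_out m k \<sigma> \<delta>) D"
  define c where "c = \<sigma> * sqrt (2 * ln (1 / \<delta>))"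
  define thr where "thr D = 1 + c - max 1 (gap m k D)" for D
  have mech: "mech_distr M (ptr_gauss_out m k \<sigma> \<delta>) D
      = distr M (count_space UNIV) (threshold_release (thr D) (topk m k D))" for M D
    by (simp add: mech_distr_def ptr_gauss_out_eq thr_def c_def)
  show "\<exists>E E'. E \<in> sets ?N \<and> E' \<in> sets ?N \<and> 1 - \<delta> \<le> measure ?N E \<and> 1 - \<delta> \<le> measure ?N E' \<and>
      (\<forall>\<alpha>\<ge>1. renyi_div \<alpha> (?M E D) (?M E' D') \<le> ereal (\<alpha> / (2 * \<sigma> ^ 2)))"
  proof (cases "topk m k D = topk m k D'")
    case True
    have "\<bar>thr D - thr D'\<bar> \<le> 1"
      using abs_gap_neighboring_le_1[OF k neighbors] by (simp add: thr_def max_def abs_le_iff)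
    hence sq: "(thr D - thr D')\<^sup>2 \<le> 1" by (simp add: abs_square_le_1)
    have "renyi_div \<alpha> (?M UNIV D) (?M UNIV D') \<le> ereal (\<alpha> / (2 * \<sigma> ^ 2))" if \<alpha>: "\<alpha> \<ge> 1" for \<alpha>
    proof -
      have "renyi_div \<alpha> (?M UNIV D) (?M UNIV D') \<le> ereal (\<alpha> * ((thr D - thr D')\<^sup>2 / (2 * \<sigma>\<^sup>2)))"
        using gauss_threshold_release_renyi_div_le[OF \<sigma> \<alpha>] cond_on_space[OF prob_space_gauss_distr[OF \<sigma>]] True
        by (simp add: mech)
      also have "\<alpha> * ((thr D - thr D')\<^sup>2 / (2 * \<sigma>\<^sup>2)) \<le> \<alpha> / (2 * \<sigma>\<^sup>2)"
        using mult_left_mono[OF sq, of \<alpha>] \<alpha> \<sigma> by (simp add: divide_right_mono)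
      finally show ?thesis by simp
    qed
    moreover have "measure ?N UNIV = 1"
      using prob_space.prob_space[OF prob_space_gauss_distr[OF \<sigma>]] by simp
    ultimately show ?thesis using \<delta> by (intro exI[of _ UNIV]) simp
  next
    case False
    hence "thr D = c" "thr D' = c"
      using gap_le_1_if_topk_ne[OF k neighbors] by (simp_all add: thr_def)
    hence "renyi_div \<alpha> (?M {..c} D) (?M {..c} D') = 0" for \<alpha>
      using cond_gauss_threshold_release_renyi_div_eq_0[OF \<sigma>] False by (simp add: mech)
    moreover have "1 - \<delta> \<le> measure ?N {..c}"
      unfolding c_def by (rule gauss_atMost_ge_1_minus_delta[OF \<sigma> \<delta>])
    ultimately show ?thesis using \<sigma> by (intro exI[of _ "{..c}"]) simp
  qed
qed

theorem mainTheorem8: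
  fixes m k :: nat and \<delta>t \<epsilon> \<sigma>2 :: real
  assumes "1 \<le> k" and "k \<le> m - 1"
    and "0 < \<delta>t" and "\<delta>t < 1"
  shows "(\<epsilon> > 0 \<longrightarrow> is_dp m (laplace_distr (1 / \<epsilon>)) (ptr_laplace_out m k \<epsilon> \<delta>t) \<epsilon> \<delta>t)
       \<and> (\<sigma>2 > 0 \<longrightarrow> approx_rdp m (gauss_distr \<sigma>2) (ptr_gauss_out m k \<sigma>2 \<delta>t) \<delta>t
                        (\<lambda>\<alpha>. \<alpha> / (2 * \<sigma>2 ^ 2)))"
proof -
  have "k < m" using assms(1,2) by simp
  thus ?thesis using ptr_laplace_is_dp ptr_gauss_approx_rdp assms(1,3,4) by blast
qed

end
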